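(* Let $(K,\mathrm{val})$ be a $2$-henselian valued field whose residue class field $F$ has characteristic $\neq2$ and is formally real, and suppose $(K,\mathrm{val})$ admits an angular component map $\mathrm{an}:K^\times\to F^\times$ (used as $\mathrm{p.an}$ in the definition of $\Phi^A$). Let $A$ be a subring with $B\subseteq A\subseteq K$ and let $f\in A\setminus\{0\}$. Then the quasi-quadratic module in $A$ generated by $f$, namely $\{f(u_1^2+\cdots+u_m^2): m\ge0,\ u_i\in A\}$, equals $\Phi^A(M_f,[\![\mathrm{val}(f)]\!])$, where $M_f=\{\mathrm{an}(f)(c_1^2+\cdots+c_m^2): m\ge 0,\ c_i\in F\}$ is the quasi-quadratic module of $F$ generated by $\mathrm{an}(f)$.
   Context: Let $(G,\le)$ be a totally ordered abelian group written multiplicatively with identity $e$; $G_{\ge e}=\{g\in G:g\ge e\}$, $G^2=\{g^2:g\in G\}$. Let $(K,\mathrm{val})$ be a valued field with surjective valuation $\mathrm{val}:K\to G\cup\{\infty\}$, valuation ring $B=\{x:\mathrm{val}(x)\ge e\}$, residue map $\pi:B\to F$, residue field $F$. A strict unit is $x\in B^\times$ with $\pi(x)=1$; when $\mathrm{char}F\ne2$, $2$-henselian is equivalent to every strict unit being a square in $K$. For a subring $A$ with $B\subseteq A\subseteq K$ put $H=\mathrm{val}(A^\times)$. For $g\in G$: $\overline g$ is its class in $G/G^2$, $[\![g]\!]$ its class in $G/H^2$; "$\mathrm{val}(x)=\overline g$" means $\overline{\mathrm{val}(x)}=\overline g$, similarly for $[\![\cdot]\!]$. A quasi-quadratic module in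 a commutative ring $R$ is a subset $M\subseteq R$ with $M+M\subseteq M$ and $a^2M\subseteq M$ for all $a\in R$. A pseudo-angular component map is a map $\mathrm{p.an}:K^\times\to F^\times$ such that: (1) $\mathrm{p.an}(u)=\pi(u)$ for $u\in B^\times$; (2) $\mathrm{p.an}(ux)=\pi(u)\mathrm{p.an}(x)$ for $u\in B^\times,x\in K^\times$; (3) for all $g\in G$, $c\in F^\times$ there is $w\in K$ with $\mathrm{val}(w)=g$, $\mathrm{p.an}(w)=c$; (4) for nonzero $x_1,x_2$ with $x_1+x_2\ne0$: if $\mathrm{val}(x_1)<\mathrm{val}(x_2)$ then $\mathrm{p.an}(x_1+x_2)=\mathrm{p.an}(x_1)$; if $\mathrm{val}(x_1)=\mathrm{val}(x_2)$ and $\mathrm{p.an}(x_1)+\mathrm{p.an}(x_2)\ne0$ then $\mathrm{val}(x_1+x_2)=\mathrm{val}(x_1)$ and $\mathrm{p.an}(x_1+x_2)=\mathrm{p.an}(x_1)+\mathrm{p.an}(x_2)$; (5) if $x,y\in K^\times$, $\overline{\mathrm{val}(x)}=\overline{\mathrm{val}(y)}$ and $\mathrm{p.an}(x)=\mathrm{p.an}(y)$ then $y=u^2x$ for some $u\in K^\times$; (6) for $a,u\in K^\times$ there is $k\in F^\times$ with $\mathrm{p.an}(au^2)=\mathrm{p.an}(a)k^2$. An angular component map $\mathrm{an}$ is a pseudo-angular component map that is a group homomorphism. $\Phi^A(M,[\![g]\!])=\{x\in A\setminus\{0\}:\ \mathrm{val}(x)=\overline g,\ (\mathrm{val}(x)=[\![g]\!]\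 \text{or}\ \mathrm{val}(x)>g),\ \mathrm{an}(x)\in M\}\cup\{0\}$. *)

theory Defs
  imports Main
begin

text \<open>The valuation is a map val from K to G, only meaningful on nonzero elements
  (val 0 = infinity is handled by explicit case distinctions).\<close>

definition valuation :: "('k::field \<Rightarrow> 'g::linordered_ab_group_add) \<Rightarrow> bool" where
  "valuation val \<longleftrightarrow>
     (\<forall>x y. x \<noteq> 0 \<longrightarrow> y \<noteq> 0 \<longrightarrow> val (x * y) = val x + val y) \<and>
     (\<forall>x y. x \<noteq> 0 \<longrightarrow> y \<noteq> 0 \<longrightarrow> x + y \<noteq> 0 \<longrightarrow> min (val x) (val y) \<le> val (x + y)) \<and>
     (\<forall>g. \<exists>x. x \<noteq> 0 \<and> val x = g)"

definition val_ring :: "('k::field \<Rightarrow> 'g::linordered_ab_group_add) \<Rightarrow> 'k set" where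
  "val_ring val = {x. x = 0 \<or> 0 \<le> val x}"

definition val_units :: "('k::field \<Rightarrow> 'g::linordered_ab_group_add) \<Rightarrow> 'k set" where
  "val_units val = {x. x \<noteq> 0 \<and> val x = 0}"

definition residue_map :: "('k::field \<Rightarrow> 'g::linordered_ab_group_add) \<Rightarrow> ('k \<Rightarrow> 'f::field) \<Rightarrow> bool" where
  "residue_map val pi \<longleftrightarrow>
     (\<forall>x\<in>val_ring val. \<forall>y\<in>val_ring val. pi (x + y) = pi x + pi y \<and> pi (x * y) = pi x * pi y) \<and>
     pi 1 = 1 \<and>
     (\<forall>c. \<exists>x\<in>val_ring val. pi x = c) \<and>
     (\<forall>x\<in>val_ring val. pi x = 0 \<longleftrightarrow> (x = 0 \<or> 0 < val x))"

definition strict_unit :: "('k::field \<Rightarrow> 'g::linordered_ab_group_add) \<Rightarrow> ('k \<Rightarrow> 'f::field) \<Rightarrow> 'k \<Rightarrow> bool" where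
  "strict_unit val pi x \<longleftrightarrow> x \<in> val_units val \<and> pi x = 1"

text \<open>2-henselian (for residue characteristic not 2): every strict unit is a square in K.\<close>
definition two_henselian :: "('k::field \<Rightarrow> 'g::linordered_ab_group_add) \<Rightarrow> ('k \<Rightarrow> 'f::field) \<Rightarrow> bool" where
  "two_henselian val pi \<longleftrightarrow> (\<forall>x. strict_unit val pi x \<longrightarrow> (\<exists>y. x = y\<^sup>2))"

definition formally_real :: "'f::field itself \<Rightarrow> bool" where
  "formally_real _ \<longleftrightarrow> (\<forall>cs :: 'f list. sum_list (map (\<lambda>c. c\<^sup>2) cs) \<noteq> - 1)"

text \<open>Classes modulo G^2 (g = 2h in additive notation).\<close>
definition same_class_G2 :: "'g::linordered_ab_group_add \<Rightarrow> 'g \<Rightarrow> bool" where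
  "same_class_G2 a g \<longleftrightarrow> (\<exists>h. a - g = h + h)"

definition pseudo_angular_component ::
  "('k::field \<Rightarrow> 'g::linordered_ab_group_add) \<Rightarrow> ('k \<Rightarrow> 'f::field) \<Rightarrow> ('k \<Rightarrow> 'f) \<Rightarrow> bool" where
  "pseudo_angular_component val pi pan \<longleftrightarrow>
     (\<forall>x. x \<noteq> 0 \<longrightarrow> pan x \<noteq> 0) \<and>
     (\<forall>u\<in>val_units val. pan u = pi u) \<and>
     (\<forall>u\<in>val_units val. \<forall>x. x \<noteq> 0 \<longrightarrow> pan (u * x) = pi u * pan x) \<and>
     (\<forall>g c. c \<noteq> 0 \<longrightarrow> (\<exists>w. w \<noteq> 0 \<and> val w = g \<and> pan w = c)) \<and>
     (\<forall>x1 x2. x1 \<noteq> 0 \<longrightarrow> x2 \<noteq> 0 \<longrightarrow> x1 + x2 \<noteq> 0 \<longrightarrow>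
        (val x1 < val x2 \<longrightarrow> pan (x1 + x2) = pan x1) \<and>
        (val x1 = val x2 \<longrightarrow> pan x1 + pan x2 \<noteq> 0 \<longrightarrow>
           val (x1 + x2) = val x1 \<and> pan (x1 + x2) = pan x1 + pan x2)) \<and>
     (\<forall>x y. x \<noteq> 0 \<longrightarrow> y \<noteq> 0 \<longrightarrow> same_class_G2 (val x) (val y) \<longrightarrow> pan x = pan y \<longrightarrow>
        (\<exists>u. u \<noteq> 0 \<and> y = u\<^sup>2 * x)) \<and>
     (\<forall>a u. a \<noteq> 0 \<longrightarrow> u \<noteq> 0 \<longrightarrow> (\<exists>k. k \<noteq> 0 \<and> pan (a * u\<^sup>2) = pan a * k\<^sup>2))"

definition angular_component ::
  "('k::field \<Rightarrow> 'g::linordered_ab_group_add) \<Rightarrow> ('k \<Rightarrow> 'f::field) \<Rightarrow> ('k \<Rightarrow> 'f) \<Rightarrow> bool" where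
  "angular_component val pi an \<longleftrightarrow> pseudo_angular_component val pi an \<and>
     (\<forall>x y. x \<noteq> 0 \<longrightarrow> y \<noteq> 0 \<longrightarrow> an (x * y) = an x * an y)"

definition is_subring :: "'k::field set \<Rightarrow> bool" where
  "is_subring A \<longleftrightarrow> 1 \<in> A \<and> (\<forall>x\<in>A. \<forall>y\<in>A. x + y \<in> A \<and> x * y \<in> A \<and> - x \<in> A)"

definition H_grp :: "('k::field \<Rightarrow> 'g::linordered_ab_group_add) \<Rightarrow> 'k set \<Rightarrow> 'g set" where
  "H_grp val A = val ` {x \<in> A. x \<noteq> 0 \<and> inverse x \<in> A}"

definition same_class_H2 :: "('k::field \<Rightarrow> 'g::linordered_ab_group_add) \<Rightarrow> 'k set \<Rightarrow> 'g \<Rightarrow> 'g \<Rightarrow> bool" where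
  "same_class_H2 val A a g \<longleftrightarrow> (\<exists>h\<in>H_grp val A. a - g = h + h)"

definition Phi :: "('k::field \<Rightarrow> 'g::linordered_ab_group_add) \<Rightarrow> ('k \<Rightarrow> 'f::field) \<Rightarrow> 'k set
     \<Rightarrow> 'f set \<Rightarrow> 'g \<Rightarrow> 'k set" where
  "Phi val an A M g = {x \<in> A. x \<noteq> 0 \<and> same_class_G2 (val x) g \<and>
       (same_class_H2 val A (val x) g \<or> g < val x) \<and> an x \<in> M} \<union> {0}"

definition qqm_gen :: "'a::comm_ring_1 set \<Rightarrow> 'a \<Rightarrow> 'a set" where
  "qqm_gen S a = {a * sum_list (map (\<lambda>u. u\<^sup>2) us) | us. set us \<subseteq> S}"

end

theory Submission
  imports Defs
begin

text \<open>
  A nonzero sum of squares \<open>\<Sum> u\<^sub>i\<^sup>2\<close> factors as \<open>v\<^sup>2 w\<close>, where \<open>v\<close> is a summand of least value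
  and \<open>w\<close> is a unit whose residue is a sum of squares containing \<open>1\<^sup>2\<close>; since \<open>F\<close> is formally
  real, that residue is nonzero. Hence \<open>f \<Sum> u\<^sub>i\<^sup>2\<close> has value \<open>val f + 2 val v\<close> and angular
  component \<open>an f \<cdot> an(v)\<^sup>2 \<cdot> \<pi>(w)\<close>, which is exactly membership in \<open>\<Phi>\<close>. Conversely, given
  \<open>x \<in> \<Phi>\<close> choose \<open>a \<in> A\<close> with \<open>val x = val f + 2 val a\<close> (a unit of \<open>A\<close>, or an element of
  positive value) and lift \<open>an(x) / (an f \<cdot> an(a)\<^sup>2)\<close> to a sum of squares \<open>s\<close> in \<open>B\<close>.
  Then \<open>x / (f a\<^sup>2 s)\<close> is a strict unit, hence a square by 2-henselianity.
\<close>

abbreviation sum_squares :: "'a::comm_ring_1 list \<Rightarrow> 'a" where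
  "sum_squares xs \<equiv> sum_list (map (\<lambda>u. u\<^sup>2) xs)"

lemma qqm_gen_iff: "x \<in> qqm_gen S a \<longleftrightarrow> (\<exists>us. set us \<subseteq> S \<and> x = a * sum_squares us)"
  by (auto simp: qqm_gen_def)

lemma sum_squares_mult: "sum_squares (map ((*) c) xs) = c\<^sup>2 * sum_squares xs"
  by (induction xs) (simp_all add: power_mult_distrib distrib_left)

lemma sum_squares_eq_0: "(\<forall>u\<in>set us. u = 0) \<Longrightarrow> sum_squares us = 0"
  by (induction us) auto

locale valued_field =
  fixes val :: "'k::field \<Rightarrow> 'g::linordered_ab_group_add" and pi :: "'k \<Rightarrow> 'f::field"
  assumes valuation: "valuation val" and residue: "residue_map val pi"
begin

lemma val_mult: "x \<noteq> 0 \<Longrightarrow> y \<noteq> 0 \<Longrightarrow> val (x * y) = val x + val y"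
  using valuation unfolding valuation_def by blast

lemma val_one: "val 1 = 0"
  using val_mult[of 1 1] by simp

lemma val_inverse: "x \<noteq> 0 \<Longrightarrow> val (inverse x) = - val x"
  using val_mult[of x "inverse x"] val_one by (simp add: add.commute eq_neg_iff_add_eq_0)

lemma val_surj: "\<exists>x. x \<noteq> 0 \<and> val x = g"
  using valuation unfolding valuation_def by blast

lemma val_add_ge_min: "x \<noteq> 0 \<Longrightarrow> y \<noteq> 0 \<Longrightarrow> x + y \<noteq> 0 \<Longrightarrow> min (val x) (val y) \<le> val (x + y)"
  using valuation unfolding valuation_def by blast

lemma val_ring_mult: "x \<in> val_ring val \<Longrightarrow> y \<in> val_ring val \<Longrightarrow> x * y \<in> val_ring val"
  unfolding val_ring_def using val_mult by fastforce

lemma val_ring_add: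
  assumes "x \<in> val_ring val" "y \<in> val_ring val"
  shows "x + y \<in> val_ring val"
proof (cases "x = 0 \<or> y = 0 \<or> x + y = 0")
  case False
  have "0 \<le> min (val x) (val y)"
    using assms False by (simp add: val_ring_def)
  also have "\<dots> \<le> val (x + y)"
    using False val_add_ge_min by blast
  finally show ?thesis
    by (simp add: val_ring_def)
qed (use assms in \<open>auto simp: val_ring_def\<close>)

lemma residue_add: "x \<in> val_ring val \<Longrightarrow> y \<in> val_ring val \<Longrightarrow> pi (x + y) = pi x + pi y"
  using residue unfolding residue_map_def by blast

lemma residue_mult: "x \<in> val_ring val \<Longrightarrow> y \<in> val_ring val \<Longrightarrow> pi (x * y) = pi x * pi y"
  using residue unfolding residue_map_def by blast

lemma residue_one: "pi 1 = 1"
  using residue unfolding residue_map_def by blast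

lemma residue_surj: "\<exists>x\<in>val_ring val. pi x = c"
  using residue unfolding residue_map_def by blast

lemma residue_eq_0_iff: "x \<in> val_ring val \<Longrightarrow> pi x = 0 \<longleftrightarrow> x = 0 \<or> 0 < val x"
  using residue unfolding residue_map_def by blast

lemma residue_zero: "pi 0 = 0"
  using residue_eq_0_iff[of 0] by (simp add: val_ring_def)

lemma residue_nonzero_imp_unit: "x \<in> val_ring val \<Longrightarrow> pi x \<noteq> 0 \<Longrightarrow> x \<in> val_units val"
  using residue_eq_0_iff[of x] by (auto simp: val_ring_def val_units_def)

lemma sum_squares_residue:
  assumes "set bs \<subseteq> val_ring val"
  shows "sum_squares bs \<in> val_ring val \<and> pi (sum_squares bs) = sum_squares (map pi bs)"
  using assms
proof (induction bs)
  case Nil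
  then show ?case by (simp add: val_ring_def residue_zero)
next
  case (Cons b bs)
  then have b2: "b\<^sup>2 \<in> val_ring val" "pi (b\<^sup>2) = (pi b)\<^sup>2"
    using val_ring_mult[of b b] residue_mult[of b b] by (simp_all add: power2_eq_square)
  with Cons show ?case
    by (simp add: val_ring_add residue_add)
qed

lemma sum_squares_eq_square_times_unit:
  assumes real: "formally_real TYPE('f)" and "u \<in> set us" "u \<noteq> 0"
  obtains v w cs where "v \<in> set us" "v \<noteq> 0" "w \<in> val_units val"
    "sum_squares us = v\<^sup>2 * w" "pi w = sum_squares cs"
proof -
  define S where "S = {u \<in> set us. u \<noteq> 0}"
  have "finite (val ` S)" "val ` S \<noteq> {}"
    using assms by (auto simp: S_def)
  then have "Min (val ` S) \<in> val ` S"
    by (rule Min_in)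
  then obtain v where v: "v \<in> S" "val v = Min (val ` S)"
    by auto
  then have v_min: "val v \<le> val u" if "u \<in> set us" "u \<noteq> 0" for u
    using that \<open>finite (val ` S)\<close> by (simp add: S_def)
  have v0: "v \<in> set us" "v \<noteq> 0"
    using v by (auto simp: S_def)
  define vs where "vs = map (\<lambda>u. u / v) us"
  have "set vs \<subseteq> val_ring val"
  proof
    fix y
    assume "y \<in> set vs"
    then obtain u where "u \<in> set us" "y = u / v"
      by (auto simp: vs_def)
    then show "y \<in> val_ring val"
      using v_min[of u] v0 val_mult[of u "inverse v"] val_inverse[of v]
      by (cases "u = 0") (auto simp: val_ring_def divide_inverse)
  qed
  then have w: "sum_squares vs \<in> val_ring val" "pi (sum_squares vs) = sum_squares (map pi vs)"
    using sum_squares_residue by blast+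
  have "1 \<in> set (map pi vs)"
    using v0 residue_one by (force simp: vs_def)
  then have "pi (sum_squares vs) = 1 + sum_squares (remove1 1 (map pi vs))"
    using w(2) sum_list_map_remove1[of 1 "map pi vs" "\<lambda>c. c\<^sup>2"] by simp
  moreover have "sum_squares (remove1 1 (map pi vs)) \<noteq> -1"
    using real unfolding formally_real_def by blast
  ultimately have "pi (sum_squares vs) \<noteq> 0"
    by (metis add_eq_0_iff)
  then have "sum_squares vs \<in> val_units val"
    using residue_nonzero_imp_unit w(1) by blast
  moreover have "sum_squares us = v\<^sup>2 * sum_squares vs"
    using sum_squares_mult[of v vs] v0 by (simp add: vs_def o_def)
  ultimately show ?thesis
    using that v0 w(2) by blast
qed

lemma sum_squares_lift:
  obtains bs where "set bs \<subseteq> val_ring val" "map pi bs = cs"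
proof -
  have "\<forall>c. \<exists>b. b \<in> val_ring val \<and> pi b = c"
    using residue_surj by blast
  then obtain lift where "\<And>c. lift c \<in> val_ring val \<and> pi (lift c) = c"
    by metis
  then show ?thesis
    using that[of "map lift cs"] by (auto simp: o_def map_idI)
qed

end

locale angular_valued_field = valued_field val pi
  for val :: "'k::field \<Rightarrow> 'g::linordered_ab_group_add" and pi :: "'k \<Rightarrow> 'f::field" +
  fixes an :: "'k \<Rightarrow> 'f"
  assumes angular: "angular_component val pi an"
begin

lemma an_nonzero: "x \<noteq> 0 \<Longrightarrow> an x \<noteq> 0"
  using angular by (simp add: angular_component_def pseudo_angular_component_def)

lemma an_unit: "u \<in> val_units val \<Longrightarrow> an u = pi u"
  using angular by (simp add: angular_component_def pseudo_angular_component_def)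

lemma an_mult: "x \<noteq> 0 \<Longrightarrow> y \<noteq> 0 \<Longrightarrow> an (x * y) = an x * an y"
  using angular by (simp add: angular_component_def)

lemma square_multiple_of_same_val_an:
  assumes "x \<noteq> 0" "y \<noteq> 0" "val x = val y" "an x = an y" "two_henselian val pi"
  obtains z where "z \<in> val_units val" "x = z\<^sup>2 * y"
proof -
  have q: "x / y \<noteq> 0" "x = x / y * y"
    using assms by simp_all
  then have "val (x / y) = 0" "an (x / y) = 1"
    using assms val_mult[of "x / y" y] an_mult[of "x / y" y] an_nonzero[of y] by auto
  then have "strict_unit val pi (x / y)"
    using q an_unit by (simp add: strict_unit_def val_units_def)
  then obtain z where z: "x / y = z\<^sup>2"
    using assms(5) unfolding two_henselian_def by blast
  then have "z \<noteq> 0" "val z + val z = 0"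
    using q \<open>val (x / y) = 0\<close> val_mult[of z z] by (auto simp: power2_eq_square)
  then show ?thesis
    using that[of z] z q by (simp add: val_units_def)
qed

end

locale overring = angular_valued_field val pi an
  for val :: "'k::field \<Rightarrow> 'g::linordered_ab_group_add" and pi :: "'k \<Rightarrow> 'f::field" and an +
  fixes A :: "'k set"
  assumes subring: "is_subring A" and val_ring_subset: "val_ring val \<subseteq> A"
begin

lemma mult_closed: "x \<in> A \<Longrightarrow> y \<in> A \<Longrightarrow> x * y \<in> A"
  using subring by (simp add: is_subring_def)

lemma val_ring_in: "x \<in> val_ring val \<Longrightarrow> x \<in> A"
  using val_ring_subset by blast

lemma val_in_H_grp: "v \<in> A \<Longrightarrow> v \<noteq> 0 \<Longrightarrow> val v \<le> 0 \<Longrightarrow> val v \<in> H_grp val A"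
  using val_inverse[of v] val_ring_in[of "inverse v"] by (force simp: H_grp_def val_ring_def)

lemma mult_sum_squares_in_Phi:
  assumes real: "formally_real TYPE('f)" and f: "f \<in> A" "f \<noteq> 0" and us: "set us \<subseteq> A"
  shows "f * sum_squares us \<in> Phi val an A (qqm_gen UNIV (an f)) (val f)"
proof (cases "\<exists>u\<in>set us. u \<noteq> 0")
  case False
  then show ?thesis
    by (simp add: Phi_def sum_squares_eq_0)
next
  case True
  then obtain v w cs where v: "v \<in> set us" "v \<noteq> 0" and w: "w \<in> val_units val"
    and sum: "sum_squares us = v\<^sup>2 * w" and cs: "pi w = sum_squares cs"
    using sum_squares_eq_square_times_unit[OF real] by metis
  define x where "x = f * sum_squares us"
  have x: "x = f * (v * v) * w" "x \<noteq> 0" "x \<in> A"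
    using sum f v w us val_ring_in mult_closed
    by (auto simp: x_def power2_eq_square mult.assoc val_units_def val_ring_def)
  have val_x: "val x = val f + (val v + val v)"
    using x(1) f v w val_mult by (simp add: val_units_def)
  then have "same_class_G2 (val x) (val f)"
    by (auto simp: same_class_G2_def)
  moreover have "same_class_H2 val A (val x) (val f) \<or> val f < val x"
    using val_x val_in_H_grp[of v] v us
    by (cases "0 < val v") (auto simp: same_class_H2_def not_less add_pos_pos)
  moreover have "an x = an f * ((an v)\<^sup>2 * sum_squares cs)"
    using x(1) f v w an_mult an_unit[OF w] cs by (simp add: power2_eq_square val_units_def mult_ac)
  then have "an x = an f * sum_squares (map ((*) (an v)) cs)"
    by (simp only: sum_squares_mult)
  then have "an x \<in> qqm_gen UNIV (an f)"
    unfolding qqm_gen_iff by blast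
  ultimately have "x \<in> Phi val an A (qqm_gen UNIV (an f)) (val f)"
    using x by (simp add: Phi_def)
  then show ?thesis
    by (simp add: x_def)
qed

lemma Phi_class_witness:
  assumes "x \<in> A" "same_class_G2 (val x) g" "same_class_H2 val A (val x) g \<or> g < val x"
  obtains a where "a \<in> A" "a \<noteq> 0" "val x = g + (val a + val a)"
  using assms(3)
proof
  assume "same_class_H2 val A (val x) g"
  then show ?thesis
    using that by (force simp: same_class_H2_def H_grp_def algebra_simps)
next
  assume "g < val x"
  moreover obtain h where h: "val x - g = h + h"
    using assms(2) by (auto simp: same_class_G2_def)
  ultimately have "0 < h"
    by (metis diff_gt_0_iff_gt zero_less_double_add_iff_zero_less_single_add)
  obtain b where b: "b \<noteq> 0" "val b = h"
    using val_surj by blast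
  then have "b \<in> A"
    using \<open>0 < h\<close> val_ring_in by (simp add: val_ring_def)
  then show ?thesis
    using that[of b] b h by (simp add: diff_eq_eq add.commute)
qed

lemma Phi_nonzero_in_qqm_gen:
  assumes hensel: "two_henselian val pi" and f: "f \<in> A" "f \<noteq> 0"
    and x: "x \<in> Phi val an A (qqm_gen UNIV (an f)) (val f)" "x \<noteq> 0"
  shows "x \<in> qqm_gen A f"
proof -
  obtain cs where cs: "an x = an f * sum_squares cs"
    using x by (auto simp: Phi_def qqm_gen_iff)
  obtain a where a: "a \<in> A" "a \<noteq> 0" "val x = val f + (val a + val a)"
    using x Phi_class_witness[of x "val f"] by (auto simp: Phi_def)
  obtain bs where bs: "set bs \<subseteq> val_ring val" "map pi bs = map (\<lambda>c. c / an a) cs"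
    using sum_squares_lift by blast
  define s where "s = sum_squares bs"
  have s_res: "s \<in> val_ring val" "pi s = sum_squares (map pi bs)"
    using sum_squares_residue[OF bs(1)] by (simp_all add: s_def)
  have "pi s = (inverse (an a))\<^sup>2 * sum_squares cs"
    using s_res(2) bs(2) sum_squares_mult[of "inverse (an a)" cs]
    by (simp add: o_def divide_inverse mult.commute)
  then have pi_s: "an a * an a * pi s = sum_squares cs"
    using an_nonzero[OF a(2)] by (simp add: power2_eq_square field_simps)
  moreover have "sum_squares cs \<noteq> 0"
    using cs an_nonzero x(2) by force
  ultimately have s: "s \<in> val_units val"
    using s_res(1) residue_nonzero_imp_unit by force
  define y where "y = f * (a * a) * s"
  have y: "y \<noteq> 0" "val x = val y" "an x = an y"
    using s a f pi_s cs an_unit[OF s]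
    by (simp_all add: y_def val_units_def val_mult an_mult mult.assoc)
  then obtain z where z: "z \<in> val_units val" "x = z\<^sup>2 * y"
    using square_multiple_of_same_val_an[OF x(2) y hensel] by blast
  then have za: "z * a \<in> A"
    using a(1) val_ring_in mult_closed by (simp add: val_units_def val_ring_def)
  moreover have "x = f * ((z * a)\<^sup>2 * s)"
    using z(2) by (simp add: y_def power2_eq_square mult_ac)
  then have "x = f * sum_squares (map ((*) (z * a)) bs)"
    by (simp only: s_def sum_squares_mult)
  moreover have "set (map ((*) (z * a)) bs) \<subseteq> A"
    using bs(1) za val_ring_in mult_closed by auto
  ultimately show ?thesis
    unfolding qqm_gen_iff by blast
qed

end

theorem mainTheorem14:
  fixes val :: "'k::field \<Rightarrow> 'g::linordered_ab_group_add"
    and pi :: "'k \<Rightarrow> 'f::field"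
    and an :: "'k \<Rightarrow> 'f"
    and A :: "'k set"
    and f :: 'k
  assumes "valuation val"
    and "residue_map val pi"
    and "(2::'f) \<noteq> 0"
    and "formally_real TYPE('f)"
    and "two_henselian val pi"
    and "angular_component val pi an"
    and "is_subring A"
    and "val_ring val \<subseteq> A"
    and "f \<in> A" and "f \<noteq> 0"
  shows "qqm_gen A f = Phi val an A (qqm_gen UNIV (an f)) (val f)"
proof -
  interpret overring val pi an A
    using assms(1,2,6-8) by unfold_locales
  show ?thesis
  proof (intro set_eqI iffI)
    fix x
    assume "x \<in> qqm_gen A f"
    then show "x \<in> Phi val an A (qqm_gen UNIV (an f)) (val f)"
      using mult_sum_squares_in_Phi assms(4,9,10) by (auto simp: qqm_gen_iff)
  next
    fix x
    assume "x \<in> Phi val an A (qqm_gen UNIV (an f)) (val f)"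
    then show "x \<in> qqm_gen A f"
      using Phi_nonzero_in_qqm_gen[OF assms(5,9,10)] qqm_gen_iff[of 0 A f]
      by (cases "x = 0") (auto intro: exI[of _ "[]"])
  qed
qed

end
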